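(* Let $M=(W,D,\{P_i\}_{i\in\mathcal{A}},V,\mathsf{val})$ be a model, $w\in W$, $i\in\mathcal{A}$ an agent, $t$ an atomic term, and $\eta\in\Theta_V^{+}=(\tfrac12,1]\cap\mathbb{Q}$. Then \[ M,w\models Kv_i^\eta(t)\iff \exists\, d\in D \text{ such that } P_i(w)\bigl(\llbracket t=d\rrbracket^M\bigr)\ge \eta . \] That is, the unique-existence condition in the semantics of $Kv_i^\eta(t)$ may be replaced by plain existence.
   Context: Fix a countable set $\mathsf{Prop}$ of propositional variables, a countable set $\mathsf{Term}$ of atomic terms, and a finite set of agents $\mathcal{A}=\{1,\dots,n\}$. Let $\Theta_K=[0,1]\cap\mathbb{Q}$ and $\Theta_V^+=(\frac12,1]\cap\mathbb{Q}$. Formulas are generated by $\varphi::= p\mid t=s\mid\neg\varphi\mid(\varphi\to\psi)\mid K_i^\theta\varphi\mid Kv_i^\eta(t)$ with $p\in\mathsf{Prop}$, $t,s\in\mathsf{Term}$, $i\in\mathcal{A}$, $\theta\in\Theta_K$, $\eta\in\Theta_V^+$. A model is $M=(W,D,\{P_i\}_{i\in\mathcal{A}},V,\mathsf{val})$ with $W\neq\emptyset$ a set of worlds, $D\neq\emptyset$ a domain of values, $P_i(w)$ a countably additive probability measure on the powerset of $W$ for each $i\in\mathcal{A}$, $w\in W$, $V:W\times\mathsf{Prop}\to\{0,1\}$, and $\mathsf{val}:W\times\mathsf{Term}\to D$. Write $\llbracket\varphi\rrbracket^M=\{u\in W\mid M,u\models\varphi\}$ and $\llbracket t=d\rrbracket^M=\{u\in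 W\mid \mathsf{val}(u,t)=d\}$ for $d\in D$. Satisfaction: $M,w\models p$ iff $V(w,p)=1$; $M,w\models t=s$ iff $\mathsf{val}(w,t)=\mathsf{val}(w,s)$; Boolean clauses as usual; $M,w\models K_i^\theta\varphi$ iff $P_i(w)(\llbracket\varphi\rrbracket^M)\ge\theta$; $M,w\models Kv_i^\eta(t)$ iff there exists a unique $d\in D$ with $P_i(w)(\llbracket t=d\rrbracket^M)\ge\eta$. *)

theory Defs
  imports "HOL-Probability.Probability"
begin

text \<open>Thresholds are rationals; the admissible
ranges (Theta_K, Theta_V^+) are imposed by the predicate wf_formula.\<close>

datatype ('p, 't, 'ag) formula =
    Prop 'p
  | TEq 't 't
  | Neg "('p, 't, 'ag) formula"
  | Imp "('p, 't, 'ag) formula" "('p, 't, 'ag) formula"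
  | K 'ag rat "('p, 't, 'ag) formula"
  | Kv 'ag rat 't

fun wf_formula :: "('p, 't, 'ag) formula \<Rightarrow> bool" where
  "wf_formula (Prop p) = True"
| "wf_formula (TEq t s) = True"
| "wf_formula (Neg f) = wf_formula f"
| "wf_formula (Imp f g) = (wf_formula f \<and> wf_formula g)"
| "wf_formula (K i \<theta> f) = (0 \<le> \<theta> \<and> \<theta> \<le> 1 \<and> wf_formula f)"
| "wf_formula (Kv i \<eta> t) = (1/2 < \<eta> \<and> \<eta> \<le> 1)"

record ('w, 'd, 'p, 't, 'ag) model =
  worlds :: "'w set"
  dom :: "'d set"
  P :: "'ag \<Rightarrow> 'w \<Rightarrow> 'w measure"
  V :: "'w \<Rightarrow> 'p \<Rightarrow> bool"
  val :: "'w \<Rightarrow> 't \<Rightarrow> 'd"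

definition is_model :: "('w, 'd, 'p::countable, 't::countable, 'ag::finite) model \<Rightarrow> bool" where
  "is_model M \<longleftrightarrow>
     worlds M \<noteq> {} \<and> dom M \<noteq> {} \<and>
     (\<forall>i w. w \<in> worlds M \<longrightarrow>
        prob_space (P M i w) \<and> space (P M i w) = worlds M \<and> sets (P M i w) = Pow (worlds M)) \<and>
     (\<forall>w t. w \<in> worlds M \<longrightarrow> val M w t \<in> dom M)"

definition val_ext :: "('w, 'd, 'p, 't, 'ag) model \<Rightarrow> 't \<Rightarrow> 'd \<Rightarrow> 'w set" where
  "val_ext M t d = {u \<in> worlds M. val M u t = d}"

primrec sat :: "('w, 'd, 'p, 't, 'ag) model \<Rightarrow> 'w \<Rightarrow> ('p, 't, 'ag) formula \<Rightarrow> bool" where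
  "sat M w (Prop p) = V M w p"
| "sat M w (TEq t s) = (val M w t = val M w s)"
| "sat M w (Neg f) = (\<not> sat M w f)"
| "sat M w (Imp f g) = (sat M w f \<longrightarrow> sat M w g)"
| "sat M w (K i \<theta> f) = (measure (P M i w) {u \<in> worlds M. sat M u f} \<ge> real_of_rat \<theta>)"
| "sat M w (Kv i \<eta> t) = (\<exists>!d. d \<in> dom M \<and> measure (P M i w) (val_ext M t d) \<ge> real_of_rat \<eta>)"

end

theory Submission
  imports Defs
begin

text \<open>Distinct values of t have disjoint extensions, whose probabilities therefore sum to at
most 1; so at most one of them can reach a threshold above 1/2, and uniqueness is automatic.\<close>

lemma (in prob_space) prob_disjoint_add_le_1:
  assumes "A \<in> events" "B \<in> events" "A \<inter> B = {}"
  shows "prob A + prob B \<le> 1"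
proof -
  have "prob A + prob B = prob (A \<union> B)"
    using assms by (simp add: finite_measure_Union)
  also have "\<dots> \<le> 1"
    by (rule prob_le_1)
  finally show ?thesis .
qed

lemma (in prob_space) disjoint_family_prob_gt_half_unique:
  assumes "\<And>x. F x \<in> events" "disjoint_family F" "1/2 < c"
    and "c \<le> prob (F x)" "c \<le> prob (F y)"
  shows "x = y"
proof (rule ccontr)
  assume "x \<noteq> y"
  then have "F x \<inter> F y = {}"
    using \<open>disjoint_family F\<close> by (simp add: disjoint_family_on_def)
  then have "prob (F x) + prob (F y) \<le> 1"
    by (intro prob_disjoint_add_le_1 assms(1))
  then show False
    using assms(3-5) by linarith
qed

lemma disjoint_family_val_ext: "disjoint_family (val_ext M t)"
  by (auto simp: disjoint_family_on_def val_ext_def)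

lemma prob_space_P:
  assumes "is_model M" "w \<in> worlds M"
  shows "prob_space (P M i w)"
  using assms unfolding is_model_def by blast

lemma val_ext_in_sets_P:
  assumes "is_model M" "w \<in> worlds M"
  shows "val_ext M t d \<in> sets (P M i w)"
  using assms unfolding is_model_def val_ext_def by auto

theorem proposition1:
  fixes M :: "('w, 'd, 'p::countable, 't::countable, 'ag::finite) model"
    and w :: 'w and i :: 'ag and t :: 't and \<eta> :: rat
  assumes "is_model M" and "w \<in> worlds M" and "1/2 < \<eta>" and "\<eta> \<le> 1"
  shows "sat M w (Kv i \<eta> t) \<longleftrightarrow>
         (\<exists>d \<in> dom M. measure (P M i w) (val_ext M t d) \<ge> real_of_rat \<eta>)"
proof -
  interpret prob_space "P M i w"
    using assms(1,2) by (rule prob_space_P)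
  have "1/2 < real_of_rat \<eta>"
    using assms(3) by (metis of_rat_less of_rat_divide of_rat_1 of_rat_numeral_eq)
  then have "d1 = d2"
    if "real_of_rat \<eta> \<le> prob (val_ext M t d1)" "real_of_rat \<eta> \<le> prob (val_ext M t d2)"
    for d1 d2
    using disjoint_family_prob_gt_half_unique[OF val_ext_in_sets_P[OF assms(1,2)]
        disjoint_family_val_ext] that by blast
  then show ?thesis
    by auto
qed

end
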